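(* In the setting of the context, let $(\rho,C_r,C_b,\varphi)$ be a local solution of the planar Problem B with $w=e$, and let $\rho_0=\rho(0)$, $d_0=d_r(0)$, $k_0=\rho_0/d_0$, $\Delta_c=\frac{n_c}{n_c-1}$, $\delta=(\Delta_r-\Delta_b)^2-4k_0\Delta_r\Delta_b$ (which is $\ge0$). Then $$\frac{\rho''(0)}{\rho_0}=\frac{2+\big(\frac{\Delta_r}{n_r}+\frac{\Delta_b}{n_b}\big)\pm\sqrt\delta}{2}$$ for one choice of the sign, and in particular $\dfrac{\rho''(0)}{\rho_0}\in(\Delta_b,\Delta_r)$.
   Context: Planar setting: $x(t)=(\sin t,\cos t)$, $e=(0,1)$; refractive indices $n_b>n_r>1$, outside vacuum; $\Phi_\kappa(s)=s-\sqrt{\kappa^2-1+s^2}$. For positive $\rho\in C^2$, the curve $\rho(t)x(t)$ has outer unit normal $\nu_\rho(t)=\dfrac{(\rho\sin t-\rho'\cos t,\ \rho'\sin t+\rho\cos t)}{\sqrt{\rho^2+\rho'^2}}$. For $c\in\{r,b\}$ and a constant $C_c$: $m_c(t)=\frac1{n_c}\big(x(t)-\Phi_{n_c}(x(t)\cdot\nu_\rho(t))\nu_\rho(t)\big)$, $d_c(t)=\dfrac{C_c-\rho(t)(1-\cos t)}{n_c-e\cdot m_c(t)}$, $f_c(t)=\rho(t)x(t)+d_c(t)m_c(t)$; the curve $f_c$ refracts the color-$c$ ray $m_c(t)$ at $f_c(t)$ into $e$ by Snell's law. A local solution of Problem B: $\delta\in(0,\pi/2)$, positive $\rho\in C^2[-\delta,\delta]$,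 constants $C_r,C_b$ with $d_r,d_b>0$ and $f_r,f_b$ having a normal at every point, and a $C^1$ map $\varphi:[-\delta,\delta]\to[-\delta,\delta]$ with $f_r(t)=f_b(\varphi(t))$ for all $|t|\le\delta$. (For such a solution $d_r(0)=d_b(0)$.) *)

theory Defs
  imports "HOL-Analysis.Analysis"
begin

definition xv :: "real \<Rightarrow> real \<times> real" where
  "xv t = (sin t, cos t)"

definition ev :: "real \<times> real" where
  "ev = (0, 1)"

definition dot2 :: "real \<times> real \<Rightarrow> real \<times> real \<Rightarrow> real" where
  "dot2 u v = fst u * fst v + snd u * snd v"

definition Phi :: "real \<Rightarrow> real \<Rightarrow> real" where
  "Phi \<kappa> s = s - sqrt (\<kappa>\<^sup>2 - 1 + s\<^sup>2)"

text \<open>Outer unit normal of the curve rho(t) x(t); rho' is the derivative of rho.\<close>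
definition nu :: "(real \<Rightarrow> real) \<Rightarrow> (real \<Rightarrow> real) \<Rightarrow> real \<Rightarrow> real \<times> real" where
  "nu \<rho> \<rho>' t =
     (1 / sqrt ((\<rho> t)\<^sup>2 + (\<rho>' t)\<^sup>2)) *\<^sub>R
       (\<rho> t * sin t - \<rho>' t * cos t, \<rho>' t * sin t + \<rho> t * cos t)"

definition mc :: "real \<Rightarrow> (real \<Rightarrow> real) \<Rightarrow> (real \<Rightarrow> real) \<Rightarrow> real \<Rightarrow> real \<times> real" where
  "mc n \<rho> \<rho>' t =
     (1 / n) *\<^sub>R (xv t - Phi n (dot2 (xv t) (nu \<rho> \<rho>' t)) *\<^sub>R nu \<rho> \<rho>' t)"

definition dc :: "real \<Rightarrow> real \<Rightarrow> (real \<Rightarrow> real) \<Rightarrow> (real \<Rightarrow> real) \<Rightarrow> real \<Rightarrow> real" where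
  "dc n C \<rho> \<rho>' t = (C - \<rho> t * (1 - cos t)) / (n - dot2 ev (mc n \<rho> \<rho>' t))"

definition fc :: "real \<Rightarrow> real \<Rightarrow> (real \<Rightarrow> real) \<Rightarrow> (real \<Rightarrow> real) \<Rightarrow> real \<Rightarrow> real \<times> real" where
  "fc n C \<rho> \<rho>' t = \<rho> t *\<^sub>R xv t + dc n C \<rho> \<rho>' t *\<^sub>R mc n \<rho> \<rho>' t"

text \<open>Local solution of planar Problem B (with w = e) on [-del, del]:
  rho is positive and C^2 with first/second derivatives rho', rho'' (one-sided at the endpoints),
  d_r, d_b > 0, f_r, f_b have a (nonzero) tangent, hence a normal, at every point,
  and phi is a C^1 self-map of [-del, del] with f_r = f_b o phi.\<close>
definition local_solution ::
  "real \<Rightarrow> real \<Rightarrow> real \<Rightarrow> (real \<Rightarrow> real) \<Rightarrow> (real \<Rightarrow> real) \<Rightarrow> (real \<Rightarrow> real)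
   \<Rightarrow> real \<Rightarrow> real \<Rightarrow> (real \<Rightarrow> real) \<Rightarrow> bool" where
  "local_solution nr nb del \<rho> \<rho>' \<rho>'' Cr Cb \<phi> \<longleftrightarrow>
     0 < del \<and> del < pi / 2 \<and>
     (\<forall>t\<in>{-del..del}. 0 < \<rho> t) \<and>
     (\<forall>t\<in>{-del..del}. (\<rho> has_real_derivative \<rho>' t) (at t within {-del..del})) \<and>
     (\<forall>t\<in>{-del..del}. (\<rho>' has_real_derivative \<rho>'' t) (at t within {-del..del})) \<and>
     continuous_on {-del..del} \<rho>'' \<and>
     (\<forall>t\<in>{-del..del}. 0 < dc nr Cr \<rho> \<rho>' t \<and> 0 < dc nb Cb \<rho> \<rho>' t) \<and>
     (\<forall>t\<in>{-del..del}. \<exists>v. v \<noteq> 0 \<and>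
        (fc nr Cr \<rho> \<rho>' has_vector_derivative v) (at t within {-del..del})) \<and>
     (\<forall>t\<in>{-del..del}. \<exists>v. v \<noteq> 0 \<and>
        (fc nb Cb \<rho> \<rho>' has_vector_derivative v) (at t within {-del..del})) \<and>
     (\<exists>\<phi>'. (\<forall>t\<in>{-del..del}. (\<phi> has_real_derivative \<phi>' t) (at t within {-del..del}))
           \<and> continuous_on {-del..del} \<phi>') \<and>
     \<phi> ` {-del..del} \<subseteq> {-del..del} \<and>
     (\<forall>t\<in>{-del..del}. fc nr Cr \<rho> \<rho>' t = fc nb Cb \<rho> \<rho>' (\<phi> t))"

end

theory Submission
  imports Defs
begin

(* By Snell's law the normal of f_c at f_c(t) is parallel to n_c m_c(t) - e, so f_r = f_b o phi
   forces the normals of f_r at t and of f_b at phi(t) to be parallel.  By Brouwer, phi has a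
   fixed point t0.  There f_r(t0) = f_b(t0), so both colours leave x(t0) in the same direction,
   which for different indices happens only at normal incidence, rho'(t0) = 0; the parallel
   normals then give (n_b - n_r) sin t0 = 0, i.e. t0 = 0.  With k = rho''(0)/rho0, differentiating
   at 0 the parallelism of the normals and the first component of f_r' = phi' (f_b' o phi) gives
     Delta_r - k = phi'(0) (Delta_b - k),
     rho0 + d0 (Delta_r - k)/Delta_r = phi'(0) (rho0 + d0 (Delta_b - k)/Delta_b),
   and eliminating phi'(0) leaves (Delta_r - k)(Delta_b - k) = -k0 Delta_r Delta_b, a quadratic in k
   whose roots lie strictly between Delta_b and Delta_r. *)

definition speed :: "(real \<Rightarrow> real) \<Rightarrow> (real \<Rightarrow> real) \<Rightarrow> real \<Rightarrow> real" where
  "speed \<rho> \<rho>' t = sqrt ((\<rho> t)\<^sup>2 + (\<rho>' t)\<^sup>2)"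

definition nu1 :: "(real \<Rightarrow> real) \<Rightarrow> (real \<Rightarrow> real) \<Rightarrow> real \<Rightarrow> real" where
  "nu1 \<rho> \<rho>' t = (\<rho> t * sin t - \<rho>' t * cos t) / speed \<rho> \<rho>' t"

definition nu2 :: "(real \<Rightarrow> real) \<Rightarrow> (real \<Rightarrow> real) \<Rightarrow> real \<Rightarrow> real" where
  "nu2 \<rho> \<rho>' t = (\<rho>' t * sin t + \<rho> t * cos t) / speed \<rho> \<rho>' t"

definition m1 :: "real \<Rightarrow> (real \<Rightarrow> real) \<Rightarrow> (real \<Rightarrow> real) \<Rightarrow> real \<Rightarrow> real" where
  "m1 n \<rho> \<rho>' t = (sin t - Phi n (\<rho> t / speed \<rho> \<rho>' t) * nu1 \<rho> \<rho>' t) / n"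

definition m2 :: "real \<Rightarrow> (real \<Rightarrow> real) \<Rightarrow> (real \<Rightarrow> real) \<Rightarrow> real \<Rightarrow> real" where
  "m2 n \<rho> \<rho>' t = (cos t - Phi n (\<rho> t / speed \<rho> \<rho>' t) * nu2 \<rho> \<rho>' t) / n"

definition cross2 :: "real \<times> real \<Rightarrow> real \<times> real \<Rightarrow> real" where
  "cross2 u v = fst u * snd v - snd u * fst v"

lemma speed_pos: "0 < \<rho> t \<Longrightarrow> 0 < speed \<rho> \<rho>' t"
  unfolding speed_def by (intro real_sqrt_gt_zero add_pos_nonneg) auto

lemma nu_eq: "nu \<rho> \<rho>' t = (nu1 \<rho> \<rho>' t, nu2 \<rho> \<rho>' t)"
  by (simp add: nu_def nu1_def nu2_def speed_def)

lemma dot2_xv_nu: "dot2 (xv t) (nu \<rho> \<rho>' t) = \<rho> t / speed \<rho> \<rho>' t"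
proof -
  have "sin t * (\<rho> t * sin t - \<rho>' t * cos t) + cos t * (\<rho>' t * sin t + \<rho> t * cos t)
      = \<rho> t * ((sin t)\<^sup>2 + (cos t)\<^sup>2)"
    by algebra
  then show ?thesis
    by (simp add: dot2_def xv_def nu_eq nu1_def nu2_def add_divide_distrib[symmetric])
qed

lemma cross2_xv_nu: "cross2 (xv t) (nu \<rho> \<rho>' t) = \<rho>' t / speed \<rho> \<rho>' t"
proof -
  have "sin t * (\<rho>' t * sin t + \<rho> t * cos t) - cos t * (\<rho> t * sin t - \<rho>' t * cos t)
      = \<rho>' t * ((sin t)\<^sup>2 + (cos t)\<^sup>2)"
    by algebra
  then show ?thesis
    by (simp add: cross2_def xv_def nu_eq nu1_def nu2_def diff_divide_distrib[symmetric])
qed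

lemma dot2_nu_nu: "0 < \<rho> t \<Longrightarrow> dot2 (nu \<rho> \<rho>' t) (nu \<rho> \<rho>' t) = 1"
proof -
  assume pos: "0 < \<rho> t"
  have "(\<rho> t * sin t - \<rho>' t * cos t)\<^sup>2 + (\<rho>' t * sin t + \<rho> t * cos t)\<^sup>2
      = ((\<rho> t)\<^sup>2 + (\<rho>' t)\<^sup>2) * ((sin t)\<^sup>2 + (cos t)\<^sup>2)"
    by algebra
  moreover have "(speed \<rho> \<rho>' t)\<^sup>2 = (\<rho> t)\<^sup>2 + (\<rho>' t)\<^sup>2"
    by (simp add: speed_def)
  ultimately show ?thesis
    using speed_pos[of \<rho> t \<rho>'] pos
    by (simp add: dot2_def nu_eq nu1_def nu2_def power2_eq_square[symmetric] power_divide
        add_divide_distrib[symmetric])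
qed

lemma mc_eq: "mc n \<rho> \<rho>' t = (m1 n \<rho> \<rho>' t, m2 n \<rho> \<rho>' t)"
  unfolding mc_def dot2_xv_nu by (simp add: xv_def nu_eq m1_def m2_def)

lemma scaleR_mc: "n \<noteq> 0 \<Longrightarrow> n *\<^sub>R mc n \<rho> \<rho>' t = xv t - Phi n (\<rho> t / speed \<rho> \<rho>' t) *\<^sub>R nu \<rho> \<rho>' t"
  by (simp add: mc_def dot2_xv_nu)

lemma dot2_xv_scaleR_mc:
  assumes "n \<noteq> 0"
  shows "dot2 (xv t) (n *\<^sub>R mc n \<rho> \<rho>' t)
    = 1 - Phi n (\<rho> t / speed \<rho> \<rho>' t) * (\<rho> t / speed \<rho> \<rho>' t)"
proof -
  have "dot2 x (x - P *\<^sub>R u) = dot2 x x - P * dot2 x u" for x u and P :: real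
    by (simp add: dot2_def algebra_simps)
  moreover have "dot2 (xv t) (xv t) = 1"
    by (simp add: dot2_def xv_def flip: power2_eq_square)
  ultimately show ?thesis
    using assms by (simp add: scaleR_mc dot2_xv_nu)
qed

lemma cross2_scaleR_mc_xv:
  assumes "n \<noteq> 0"
  shows "cross2 (n *\<^sub>R mc n \<rho> \<rho>' t) (xv t)
    = Phi n (\<rho> t / speed \<rho> \<rho>' t) * (\<rho>' t / speed \<rho> \<rho>' t)"
proof -
  have "cross2 (x - P *\<^sub>R u) x = P * cross2 x u" for x u and P :: real
    by (simp add: cross2_def algebra_simps)
  then show ?thesis
    using assms by (simp add: scaleR_mc cross2_xv_nu)
qed

lemma dc_eq: "dc n C \<rho> \<rho>' t = (C - \<rho> t * (1 - cos t)) / (n - m2 n \<rho> \<rho>' t)"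
  by (simp add: dc_def mc_eq ev_def dot2_def)

lemma fc_eq:
  "fc n C \<rho> \<rho>' t = (\<rho> t * sin t + dc n C \<rho> \<rho>' t * m1 n \<rho> \<rho>' t,
                     \<rho> t * cos t + dc n C \<rho> \<rho>' t * m2 n \<rho> \<rho>' t)"
  by (simp add: fc_def mc_eq xv_def)

lemma Phi_radicand_pos: "1 < (n::real) \<Longrightarrow> 0 < n\<^sup>2 - 1 + s\<^sup>2"
  using one_less_power[of n 2] by (simp add: add_pos_nonneg)

lemma refracted_sq_norm:
  fixes n x1 x2 a b :: real
  assumes n: "1 < n" and "x1\<^sup>2 + x2\<^sup>2 = 1" and "a\<^sup>2 + b\<^sup>2 = 1"
  shows "(x1 - Phi n (x1 * a + x2 * b) * a)\<^sup>2 + (x2 - Phi n (x1 * a + x2 * b) * b)\<^sup>2 = n\<^sup>2"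
proof -
  define s where "s = x1 * a + x2 * b"
  define R where "R = sqrt (n\<^sup>2 - 1 + s\<^sup>2)"
  have R: "R\<^sup>2 = n\<^sup>2 - 1 + s\<^sup>2"
    using Phi_radicand_pos[OF n, of s] by (simp add: R_def)
  have "(x1 - (s - R) * a)\<^sup>2 + (x2 - (s - R) * b)\<^sup>2
      = (x1\<^sup>2 + x2\<^sup>2) - 2 * (s - R) * s + (s - R)\<^sup>2 * (a\<^sup>2 + b\<^sup>2)"
    by (simp add: s_def power2_eq_square algebra_simps)
  also have "\<dots> = n\<^sup>2"
    using assms(2,3) R by (simp add: power2_eq_square algebra_simps)
  finally show ?thesis
    by (simp add: Phi_def s_def R_def)
qed

lemma dot2_mc_mc:
  assumes "0 < \<rho> t" "1 < n"
  shows "dot2 (mc n \<rho> \<rho>' t) (mc n \<rho> \<rho>' t) = 1"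
proof -
  have "(sin t * nu1 \<rho> \<rho>' t + cos t * nu2 \<rho> \<rho>' t) = \<rho> t / speed \<rho> \<rho>' t"
    using dot2_xv_nu[of t \<rho> \<rho>'] by (simp add: dot2_def xv_def nu_eq)
  moreover have "(nu1 \<rho> \<rho>' t)\<^sup>2 + (nu2 \<rho> \<rho>' t)\<^sup>2 = 1"
    using dot2_nu_nu[of \<rho> t \<rho>'] assms(1) by (simp add: dot2_def nu_eq power2_eq_square)
  ultimately have "(sin t - Phi n (\<rho> t / speed \<rho> \<rho>' t) * nu1 \<rho> \<rho>' t)\<^sup>2
      + (cos t - Phi n (\<rho> t / speed \<rho> \<rho>' t) * nu2 \<rho> \<rho>' t)\<^sup>2 = n\<^sup>2"
    using refracted_sq_norm[OF assms(2) sin_cos_squared_add] by metis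
  then show ?thesis
    using assms(2) by (simp add: mc_eq dot2_def m1_def m2_def power2_eq_square[symmetric]
        power_divide add_divide_distrib[symmetric])
qed

lemma m2_less:
  assumes "0 < \<rho> t" "1 < n"
  shows "m2 n \<rho> \<rho>' t < n"
proof -
  have "(m1 n \<rho> \<rho>' t)\<^sup>2 + (m2 n \<rho> \<rho>' t)\<^sup>2 = 1"
    using dot2_mc_mc[of \<rho> t n \<rho>'] assms by (simp add: mc_eq dot2_def power2_eq_square)
  then have "(m2 n \<rho> \<rho>' t)\<^sup>2 \<le> 1"
    using zero_le_power2[of "m1 n \<rho> \<rho>' t"] by linarith
  then show ?thesis
    using assms(2) abs_square_le_1[of "m2 n \<rho> \<rho>' t"] by linarith
qed

lemma differentiable_sqrt [derivative_intros]:
  fixes f :: "real \<Rightarrow> real"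
  shows "f differentiable (at x within S) \<Longrightarrow> 0 < f x \<Longrightarrow> (\<lambda>x. sqrt (f x)) differentiable (at x within S)"
  unfolding real_differentiable_def by (blast intro: DERIV_chain2[OF DERIV_real_sqrt])

lemma differentiable_sin [derivative_intros]:
  fixes f :: "real \<Rightarrow> real"
  shows "f differentiable (at x within S) \<Longrightarrow> (\<lambda>x. sin (f x)) differentiable (at x within S)"
  unfolding real_differentiable_def by (blast intro: DERIV_chain2[OF DERIV_sin])

lemma differentiable_cos [derivative_intros]:
  fixes f :: "real \<Rightarrow> real"
  shows "f differentiable (at x within S) \<Longrightarrow> (\<lambda>x. cos (f x)) differentiable (at x within S)"
  unfolding real_differentiable_def by (blast intro: DERIV_chain2[OF DERIV_cos])

lemma speed_differentiable:
  assumes "\<rho> differentiable (at t within S)" "\<rho>' differentiable (at t within S)" "0 < \<rho> t"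
  shows "speed \<rho> \<rho>' differentiable (at t within S)"
proof -
  have "0 < (\<rho> t)\<^sup>2 + (\<rho>' t)\<^sup>2" using assms(3) by (intro add_pos_nonneg) auto
  then show ?thesis
    unfolding speed_def using assms(1,2) by (intro derivative_intros; simp)
qed

context
  fixes \<rho> \<rho>' :: "real \<Rightarrow> real" and t n :: real and S :: "real set"
  assumes \<rho>: "\<rho> differentiable (at t within S)" and \<rho>': "\<rho>' differentiable (at t within S)"
    and pos: "0 < \<rho> t" and n: "1 < n"
begin

lemma Phi_incidence_differentiable:
  "(\<lambda>t. Phi n (\<rho> t / speed \<rho> \<rho>' t)) differentiable (at t within S)"
  unfolding Phi_def using \<rho> speed_differentiable[OF \<rho> \<rho>' pos] speed_pos[of \<rho> t \<rho>'] pos Phi_radicand_pos[OF n]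
  by (intro derivative_intros; simp)

lemma m1_differentiable: "m1 n \<rho> \<rho>' differentiable (at t within S)"
proof -
  have "0 < (\<rho> t)\<^sup>2 + (\<rho>' t)\<^sup>2" using pos by (intro add_pos_nonneg) auto
  then show ?thesis
    unfolding m1_def[abs_def] nu1_def speed_def Phi_def
    using \<rho> \<rho>' pos Phi_radicand_pos[OF n] n by (intro derivative_intros; simp)
qed

lemma m2_differentiable: "m2 n \<rho> \<rho>' differentiable (at t within S)"
proof -
  have "0 < (\<rho> t)\<^sup>2 + (\<rho>' t)\<^sup>2" using pos by (intro add_pos_nonneg) auto
  then show ?thesis
    unfolding m2_def[abs_def] nu2_def speed_def Phi_def
    using \<rho> \<rho>' pos Phi_radicand_pos[OF n] n by (intro derivative_intros; simp)
qed

lemma dc_differentiable: "dc n C \<rho> \<rho>' differentiable (at t within S)"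
  unfolding dc_eq[abs_def]
  using \<rho> m2_differentiable m2_less[of \<rho> t n \<rho>'] pos n
  by (intro derivative_intros; simp)

end

lemma mc_normal_incidence:
  assumes "\<rho>' t = 0" "0 < \<rho> t" "1 < n"
  shows "mc n \<rho> \<rho>' t = xv t"
proof -
  have "speed \<rho> \<rho>' t = \<rho> t" using assms by (simp add: speed_def)
  then have "nu1 \<rho> \<rho>' t = sin t" "nu2 \<rho> \<rho>' t = cos t" "\<rho> t / speed \<rho> \<rho>' t = 1"
    using assms by (simp_all add: nu1_def nu2_def)
  then show ?thesis
    using assms by (simp add: mc_eq xv_def m1_def m2_def Phi_def algebra_simps)
qed

lemma m1_has_derivative_at_0:
  assumes \<rho>: "(\<rho> has_real_derivative \<rho>' 0) (at 0 within S)"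
    and \<rho>': "(\<rho>' has_real_derivative Q) (at 0 within S)"
    and flat: "\<rho>' 0 = 0" and pos: "0 < \<rho> 0" and n: "1 < n"
  shows "(m1 n \<rho> \<rho>' has_real_derivative (n / (n - 1) - Q / \<rho> 0) / (n / (n - 1))) (at 0 within S)"
proof -
  have speed0: "speed \<rho> \<rho>' 0 = \<rho> 0" using flat pos by (simp add: speed_def)
  have diff: "\<rho> differentiable (at 0 within S)" "\<rho>' differentiable (at 0 within S)"
    using \<rho> \<rho>' real_differentiable_def by blast+
  obtain G where G: "(speed \<rho> \<rho>' has_real_derivative G) (at 0 within S)"
    using speed_differentiable[OF diff pos] real_differentiable_def by blast
  obtain P where P: "((\<lambda>t. Phi n (\<rho> t / speed \<rho> \<rho>' t)) has_real_derivative P) (at 0 within S)"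
    using Phi_incidence_differentiable[OF diff pos n] real_differentiable_def by blast
  have "((\<lambda>t. \<rho> t * sin t - \<rho>' t * cos t) has_real_derivative \<rho> 0 - Q) (at 0 within S)"
    using DERIV_diff[OF DERIV_mult[OF \<rho> has_field_derivative_at_within[OF DERIV_sin]]
        DERIV_mult[OF \<rho>' has_field_derivative_at_within[OF DERIV_cos]]] flat
    by simp
  then have nu1': "(nu1 \<rho> \<rho>' has_real_derivative 1 - Q / \<rho> 0) (at 0 within S)"
    unfolding nu1_def[abs_def]
    by (rule DERIV_cong[OF DERIV_divide[OF _ G]]) (use speed0 flat pos in \<open>simp_all add: field_simps\<close>)
  have nu1_0: "nu1 \<rho> \<rho>' 0 = 0" and Phi_0: "Phi n (\<rho> 0 / speed \<rho> \<rho>' 0) = 1 - n"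
    using speed0 flat pos n by (simp_all add: nu1_def Phi_def)
  show ?thesis
    unfolding m1_def[abs_def]
    by (intro DERIV_cong[OF DERIV_cdivide[OF DERIV_diff[OF has_field_derivative_at_within[OF DERIV_sin]
        DERIV_mult[OF P nu1']]]])
       (use n pos in \<open>simp add: nu1_0 Phi_0 field_simps\<close>)
qed

lemma at_within_Icc_nontrivial: "(a::real) < b \<Longrightarrow> t \<in> {a..b} \<Longrightarrow> at t within {a..b} \<noteq> bot"
  by (simp add: trivial_limit_within)

lemma has_real_derivative_unique_Icc:
  assumes "a < b" "t \<in> {a..b}" and eq: "\<And>x. x \<in> {a..b} \<Longrightarrow> f x = g x"
    and "(f has_real_derivative D) (at t within {a..b})"
    and "(g has_real_derivative E) (at t within {a..b})"
  shows "D = E"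
proof -
  have "(g has_real_derivative D) (at t within {a..b})"
    using has_field_derivative_transform_within[OF assms(4) zero_less_one assms(2)] eq by blast
  then show ?thesis
    using has_field_derivative_unique assms(5) at_within_Icc_nontrivial[OF assms(1,2)] by blast
qed

lemma fc_has_vector_derivative:
  assumes "(\<rho> has_real_derivative \<rho>' t) (at t within S)"
    and "(dc n C \<rho> \<rho>' has_real_derivative D) (at t within S)"
    and "(m1 n \<rho> \<rho>' has_real_derivative M1) (at t within S)"
    and "(m2 n \<rho> \<rho>' has_real_derivative M2) (at t within S)"
  shows "(fc n C \<rho> \<rho>' has_vector_derivative
      (\<rho>' t * sin t + \<rho> t * cos t + D * m1 n \<rho> \<rho>' t + dc n C \<rho> \<rho>' t * M1,
       \<rho>' t * cos t - \<rho> t * sin t + D * m2 n \<rho> \<rho>' t + dc n C \<rho> \<rho>' t * M2)) (at t within S)"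
proof -
  have "((\<lambda>t. \<rho> t * sin t + dc n C \<rho> \<rho>' t * m1 n \<rho> \<rho>' t) has_real_derivative
      \<rho>' t * sin t + \<rho> t * cos t + D * m1 n \<rho> \<rho>' t + dc n C \<rho> \<rho>' t * M1) (at t within S)"
       "((\<lambda>t. \<rho> t * cos t + dc n C \<rho> \<rho>' t * m2 n \<rho> \<rho>' t) has_real_derivative
      \<rho>' t * cos t - \<rho> t * sin t + D * m2 n \<rho> \<rho>' t + dc n C \<rho> \<rho>' t * M2) (at t within S)"
    by (rule derivative_eq_intros assms refl | simp add: algebra_simps)+
  then show ?thesis
    unfolding fc_eq[abs_def] has_real_derivative_iff_has_vector_derivative
    by (rule has_vector_derivative_Pair)
qed

lemma m_dot_derivative_eq_0:
  assumes ab: "a < b" "t \<in> {a..b}" and n: "1 < n" and pos: "\<forall>x\<in>{a..b}. 0 < \<rho> x"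
    and M1: "(m1 n \<rho> \<rho>' has_real_derivative M1) (at t within {a..b})"
    and M2: "(m2 n \<rho> \<rho>' has_real_derivative M2) (at t within {a..b})"
  shows "m1 n \<rho> \<rho>' t * M1 + m2 n \<rho> \<rho>' t * M2 = 0"
proof -
  have sq_deriv: "((\<lambda>x. (m1 n \<rho> \<rho>' x)\<^sup>2 + (m2 n \<rho> \<rho>' x)\<^sup>2) has_real_derivative
      2 * (m1 n \<rho> \<rho>' t * M1 + m2 n \<rho> \<rho>' t * M2)) (at t within {a..b})"
    by (rule derivative_eq_intros M1 M2 refl | simp add: algebra_simps)+
  have "(m1 n \<rho> \<rho>' x)\<^sup>2 + (m2 n \<rho> \<rho>' x)\<^sup>2 = 1" if "x \<in> {a..b}" for x
    using dot2_mc_mc[of \<rho> x n \<rho>'] pos n that by (simp add: mc_eq dot2_def power2_eq_square)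
  from has_real_derivative_unique_Icc[OF ab this sq_deriv DERIV_const]
  show ?thesis by simp
qed

lemma dc_derivative_relation:
  assumes ab: "a < b" "t \<in> {a..b}" and n: "1 < n" and pos: "\<forall>x\<in>{a..b}. 0 < \<rho> x"
    and \<rho>: "(\<rho> has_real_derivative \<rho>' t) (at t within {a..b})"
    and D: "(dc n C \<rho> \<rho>' has_real_derivative D) (at t within {a..b})"
    and M2: "(m2 n \<rho> \<rho>' has_real_derivative M2) (at t within {a..b})"
  shows "D * (n - m2 n \<rho> \<rho>' t) - dc n C \<rho> \<rho>' t * M2 = - (\<rho>' t * (1 - cos t) + \<rho> t * sin t)"
proof -
  have "dc n C \<rho> \<rho>' x * (n - m2 n \<rho> \<rho>' x) = C - \<rho> x * (1 - cos x)" if "x \<in> {a..b}" for x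
    using m2_less[of \<rho> x n \<rho>'] pos n that by (simp add: dc_eq)
  from has_real_derivative_unique_Icc[OF ab this
      DERIV_mult[OF D DERIV_diff[OF DERIV_const M2]]
      DERIV_diff[OF DERIV_const DERIV_mult[OF \<rho> DERIV_diff[OF DERIV_const
          has_field_derivative_at_within[OF DERIV_cos]]]]]
  show ?thesis by (simp add: algebra_simps)
qed

lemma fc_tangent_orthogonal_snell_normal:
  assumes ab: "a < b" "t \<in> {a..b}" and n: "1 < n" and pos: "\<forall>x\<in>{a..b}. 0 < \<rho> x"
    and \<rho>: "(\<rho> has_real_derivative \<rho>' t) (at t within {a..b})"
    and \<rho>': "\<rho>' differentiable (at t within {a..b})"
    and v: "(fc n C \<rho> \<rho>' has_vector_derivative v) (at t within {a..b})"
  shows "dot2 v (n *\<^sub>R mc n \<rho> \<rho>' t - ev) = 0"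
proof -
  let ?m1 = "m1 n \<rho> \<rho>' t" and ?m2 = "m2 n \<rho> \<rho>' t"
  have post: "0 < \<rho> t" using pos ab by blast
  have \<rho>_diff: "\<rho> differentiable (at t within {a..b})"
    using \<rho> real_differentiable_def by blast
  obtain D M1 M2 where D: "(dc n C \<rho> \<rho>' has_real_derivative D) (at t within {a..b})"
    and M1: "(m1 n \<rho> \<rho>' has_real_derivative M1) (at t within {a..b})"
    and M2: "(m2 n \<rho> \<rho>' has_real_derivative M2) (at t within {a..b})"
    using dc_differentiable[OF \<rho>_diff \<rho>' post n] m1_differentiable[OF \<rho>_diff \<rho>' post n]
      m2_differentiable[OF \<rho>_diff \<rho>' post n] real_differentiable_def by meson
  have v_eq: "v = (\<rho>' t * sin t + \<rho> t * cos t + D * ?m1 + dc n C \<rho> \<rho>' t * M1,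
                  \<rho>' t * cos t - \<rho> t * sin t + D * ?m2 + dc n C \<rho> \<rho>' t * M2)"
    using vector_derivative_unique_within[OF at_within_Icc_nontrivial[OF ab] v
        fc_has_vector_derivative[OF \<rho> D M1 M2]] .
  have "?m1\<^sup>2 + ?m2\<^sup>2 = 1"
    using dot2_mc_mc[of \<rho> t n \<rho>'] post n by (simp add: mc_eq dot2_def power2_eq_square)
  then have "dot2 v (n *\<^sub>R mc n \<rho> \<rho>' t - ev)
      = \<rho>' t * (dot2 (xv t) (n *\<^sub>R mc n \<rho> \<rho>' t) - 1) + \<rho> t * cross2 (n *\<^sub>R mc n \<rho> \<rho>' t) (xv t)"
    using m_dot_derivative_eq_0[OF ab n pos M1 M2] dc_derivative_relation[OF ab n pos \<rho> D M2]
    unfolding v_eq mc_eq dot2_def cross2_def ev_def xv_def by simp algebra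
  also have "\<dots> = 0"
    using n by (simp add: dot2_xv_scaleR_mc cross2_scaleR_mc_xv algebra_simps)
  finally show ?thesis .
qed

lemma fst_fc_tangent_at_0:
  assumes ab: "a < b" "0 \<in> {a..b}" and n: "1 < n"
    and \<rho>: "(\<rho> has_real_derivative \<rho>' 0) (at 0 within {a..b})"
    and \<rho>': "(\<rho>' has_real_derivative Q) (at 0 within {a..b})"
    and flat: "\<rho>' 0 = 0" and pos: "0 < \<rho> 0"
    and v: "(fc n C \<rho> \<rho>' has_vector_derivative v) (at 0 within {a..b})"
  shows "fst v = \<rho> 0 + dc n C \<rho> \<rho>' 0 * ((n / (n - 1) - Q / \<rho> 0) / (n / (n - 1)))"
proof -
  have diff: "\<rho> differentiable (at 0 within {a..b})" "\<rho>' differentiable (at 0 within {a..b})"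
    using \<rho> \<rho>' real_differentiable_def by blast+
  obtain D M2 where D: "(dc n C \<rho> \<rho>' has_real_derivative D) (at 0 within {a..b})"
    and M2: "(m2 n \<rho> \<rho>' has_real_derivative M2) (at 0 within {a..b})"
    using dc_differentiable[OF diff pos n] m2_differentiable[OF diff pos n]
      real_differentiable_def by meson
  have "m1 n \<rho> \<rho>' 0 = 0"
    using mc_normal_incidence[of \<rho>' 0 \<rho> n] flat pos n by (simp add: mc_eq xv_def)
  then show ?thesis
    using vector_derivative_unique_within[OF at_within_Icc_nontrivial[OF ab] v
        fc_has_vector_derivative[OF \<rho> D m1_has_derivative_at_0[OF \<rho> \<rho>' flat pos n] M2]] flat
    by simp
qed

lemma has_vector_derivative_reparametrization:
  assumes ab: "a < b" "t \<in> {a..b}" and \<phi>_maps: "\<phi> ` {a..b} \<subseteq> {a..b}"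
    and eq: "\<And>x. x \<in> {a..b} \<Longrightarrow> f x = g (\<phi> x)"
    and \<phi>: "(\<phi> has_real_derivative p) (at t within {a..b})"
    and f: "(f has_vector_derivative v) (at t within {a..b})"
    and g: "(g has_vector_derivative w) (at (\<phi> t) within {a..b})"
  shows "v = p *\<^sub>R w"
proof -
  have g\<phi>: "(g \<circ> \<phi> has_vector_derivative p *\<^sub>R w) (at t within {a..b})"
    using vector_diff_chain_within[OF \<phi>[unfolded has_real_derivative_iff_has_vector_derivative]
        has_vector_derivative_within_subset[OF g \<phi>_maps]] .
  have "(f has_vector_derivative p *\<^sub>R w) (at t within {a..b})"
    by (rule has_vector_derivative_transform[OF ab(2) _ g\<phi>]) (simp add: eq)
  then show ?thesis
    using vector_derivative_unique_within[OF at_within_Icc_nontrivial[OF ab] f] by blast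
qed

lemma dot2_scaleR_left: "dot2 (c *\<^sub>R u) v = c * dot2 u v"
  by (simp add: dot2_def algebra_simps)

lemma cross2_eq_0_if_orthogonal:
  assumes "v \<noteq> 0" "dot2 v p = 0" "dot2 v q = 0"
  shows "cross2 p q = 0"
proof -
  have "fst v * cross2 p q = 0" "snd v * cross2 p q = 0"
    using assms(2,3) unfolding dot2_def cross2_def by algebra+
  then show ?thesis
    using assms(1) by (auto simp: prod_eq_iff)
qed

lemma refraction_cross_identity:
  fixes x u m :: "real \<times> real"
  assumes "n *\<^sub>R m = x - P *\<^sub>R u" "dot2 x x = 1"
  shows "cross2 x u = n * (cross2 x u * dot2 x m - cross2 x m * dot2 x u)"
proof -
  have "n * fst m = fst x - P * fst u" "n * snd m = snd x - P * snd u"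
    using assms(1) by (simp_all add: prod_eq_iff)
  then show ?thesis
    using assms(2) unfolding cross2_def dot2_def by algebra
qed

lemma same_refraction_imp_normal_incidence:
  assumes n: "1 < nr" "1 < nb" "nr \<noteq> nb" and pos: "0 < \<rho> t"
    and same: "mc nr \<rho> \<rho>' t = mc nb \<rho> \<rho>' t"
  shows "\<rho>' t = 0"
proof -
  let ?m = "mc nr \<rho> \<rho>' t" and ?x = "xv t" and ?u = "nu \<rho> \<rho>' t"
  let ?K = "cross2 ?x ?u * dot2 ?x ?m - cross2 ?x ?m * dot2 ?x ?u"
  \<comment> \<open>\<open>?K\<close> involves the index only through the common refracted ray \<open>?m\<close>\<close>
  have unit: "dot2 ?x ?x = 1" by (simp add: dot2_def xv_def flip: power2_eq_square)
  have snell: "c \<noteq> 0 \<Longrightarrow> cross2 ?x ?u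
      = c * (cross2 ?x ?u * dot2 ?x (mc c \<rho> \<rho>' t) - cross2 ?x (mc c \<rho> \<rho>' t) * dot2 ?x ?u)" for c
    by (rule refraction_cross_identity[OF scaleR_mc unit])
  have r: "cross2 ?x ?u = nr * ?K"
    by (rule snell) (use n in simp)
  have b: "cross2 ?x ?u = nb * ?K"
    unfolding same by (rule snell) (use n in simp)
  have "(nr - nb) * ?K = 0"
    by (simp only: left_diff_distrib r[symmetric] b[symmetric] diff_self)
  then have "cross2 ?x ?u = 0"
    using r n by simp
  then show ?thesis
    using speed_pos[of \<rho> t \<rho>'] pos by (simp add: cross2_xv_nu)
qed

lemma fc_eq_imp_same_ray:
  assumes eq: "fc nr Cr \<rho> \<rho>' t = fc nb Cb \<rho> \<rho>' t"
    and d: "0 < dc nr Cr \<rho> \<rho>' t" "0 < dc nb Cb \<rho> \<rho>' t"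
    and pos: "0 < \<rho> t" and n: "1 < nr" "1 < nb"
  shows "dc nr Cr \<rho> \<rho>' t = dc nb Cb \<rho> \<rho>' t" "mc nr \<rho> \<rho>' t = mc nb \<rho> \<rho>' t"
proof -
  let ?dr = "dc nr Cr \<rho> \<rho>' t" and ?db = "dc nb Cb \<rho> \<rho>' t"
  have rays: "?dr *\<^sub>R mc nr \<rho> \<rho>' t = ?db *\<^sub>R mc nb \<rho> \<rho>' t"
    using eq by (simp add: fc_def)
  have sq: "dot2 (c *\<^sub>R u) (c *\<^sub>R u) = c\<^sup>2 * dot2 u u" for c u
    by (simp add: dot2_scaleR_left dot2_def power2_eq_square algebra_simps)
  have "?dr\<^sup>2 = ?db\<^sup>2"
    using sq[of ?dr "mc nr \<rho> \<rho>' t"] sq[of ?db "mc nb \<rho> \<rho>' t"] rays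
      dot2_mc_mc[of \<rho> t nr \<rho>'] dot2_mc_mc[of \<rho> t nb \<rho>'] pos n by simp
  then show "?dr = ?db"
    using d by (simp add: power2_eq_iff)
  with rays d show "mc nr \<rho> \<rho>' t = mc nb \<rho> \<rho>' t"
    by simp
qed

lemma cross2_snell_normals_normal_incidence:
  assumes "\<rho>' t = 0" "0 < \<rho> t" "1 < nr" "1 < nb"
  shows "cross2 (nr *\<^sub>R mc nr \<rho> \<rho>' t - ev) (nb *\<^sub>R mc nb \<rho> \<rho>' t - ev) = (nb - nr) * sin t"
  using mc_normal_incidence[of \<rho>' t \<rho> nr] mc_normal_incidence[of \<rho>' t \<rho> nb] assms
  by (simp add: cross2_def ev_def xv_def algebra_simps)

locale problem_B_solution =
  fixes nr nb del Cr Cb :: real and \<rho> \<rho>' \<rho>'' \<phi> \<phi>' :: "real \<Rightarrow> real"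
  assumes nr: "1 < nr" and nr_less_nb: "nr < nb"
    and del: "0 < del" "del < pi / 2"
    and pos: "\<forall>t\<in>{-del..del}. 0 < \<rho> t"
    and \<rho>: "\<forall>t\<in>{-del..del}. (\<rho> has_real_derivative \<rho>' t) (at t within {-del..del})"
    and \<rho>': "\<forall>t\<in>{-del..del}. (\<rho>' has_real_derivative \<rho>'' t) (at t within {-del..del})"
    and dc_pos: "\<forall>t\<in>{-del..del}. 0 < dc nr Cr \<rho> \<rho>' t \<and> 0 < dc nb Cb \<rho> \<rho>' t"
    and tangent_r: "\<forall>t\<in>{-del..del}. \<exists>v. v \<noteq> 0 \<and>
        (fc nr Cr \<rho> \<rho>' has_vector_derivative v) (at t within {-del..del})"
    and tangent_b: "\<forall>t\<in>{-del..del}. \<exists>v. v \<noteq> 0 \<and>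
        (fc nb Cb \<rho> \<rho>' has_vector_derivative v) (at t within {-del..del})"
    and \<phi>: "\<forall>t\<in>{-del..del}. (\<phi> has_real_derivative \<phi>' t) (at t within {-del..del})"
    and \<phi>_maps: "\<phi> ` {-del..del} \<subseteq> {-del..del}"
    and reparam: "\<forall>t\<in>{-del..del}. fc nr Cr \<rho> \<rho>' t = fc nb Cb \<rho> \<rho>' (\<phi> t)"
begin

abbreviation I :: "real set" where "I \<equiv> {-del..del}"

lemma nb: "1 < nb"
  using nr nr_less_nb by simp

lemma I_nontrivial: "-del < del"
  using del by simp

lemma zero_in_I: "0 \<in> I"
  using del by simp

lemma snell_normals_parallel:
  assumes t: "t \<in> I"
  shows "cross2 (nr *\<^sub>R mc nr \<rho> \<rho>' t - ev) (nb *\<^sub>R mc nb \<rho> \<rho>' (\<phi> t) - ev) = 0"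
proof -
  have \<phi>t: "\<phi> t \<in> I" using t \<phi>_maps by blast
  have \<rho>'_diff: "\<forall>x\<in>I. \<rho>' differentiable (at x within I)"
    using \<rho>' real_differentiable_def by blast
  obtain v where v: "v \<noteq> 0" "(fc nr Cr \<rho> \<rho>' has_vector_derivative v) (at t within I)"
    using tangent_r t by blast
  obtain w where w: "(fc nb Cb \<rho> \<rho>' has_vector_derivative w) (at (\<phi> t) within I)"
    using tangent_b \<phi>t by blast
  have "v = \<phi>' t *\<^sub>R w"
    using has_vector_derivative_reparametrization[OF I_nontrivial t \<phi>_maps _ _ v(2) w] reparam \<phi> t
    by blast
  moreover have "dot2 w (nb *\<^sub>R mc nb \<rho> \<rho>' (\<phi> t) - ev) = 0"
    using fc_tangent_orthogonal_snell_normal[OF I_nontrivial \<phi>t nb pos _ _ w] \<rho> \<rho>'_diff \<phi>t by blast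
  ultimately have "dot2 v (nb *\<^sub>R mc nb \<rho> \<rho>' (\<phi> t) - ev) = 0"
    by (simp add: dot2_scaleR_left)
  moreover have "dot2 v (nr *\<^sub>R mc nr \<rho> \<rho>' t - ev) = 0"
    using fc_tangent_orthogonal_snell_normal[OF I_nontrivial t nr pos _ _ v(2)] \<rho> \<rho>'_diff t by blast
  ultimately show ?thesis
    using cross2_eq_0_if_orthogonal[OF v(1)] by blast
qed

lemma fixed_point:
  obtains t where "t \<in> I" "\<phi> t = t"
proof (rule brouwer[of I \<phi>])
  show "continuous_on I \<phi>"
    using \<phi> DERIV_continuous continuous_on_eq_continuous_within by blast
qed (use \<phi>_maps del in auto)

lemma normal_incidence_at_0: "\<phi> 0 = 0" "\<rho>' 0 = 0" "dc nr Cr \<rho> \<rho>' 0 = dc nb Cb \<rho> \<rho>' 0"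
proof -
  obtain t where t: "t \<in> I" "\<phi> t = t"
    by (rule fixed_point)
  have common: "fc nr Cr \<rho> \<rho>' t = fc nb Cb \<rho> \<rho>' t"
    using reparam t by force
  note same_ray = fc_eq_imp_same_ray[OF common] dc_pos pos t nr nb
  have flat: "\<rho>' t = 0"
    using same_refraction_imp_normal_incidence[of nr nb \<rho> t \<rho>'] same_ray nr nb nr_less_nb by auto
  have "(nb - nr) * sin t = 0"
    using snell_normals_parallel[OF t(1)] cross2_snell_normals_normal_incidence[of \<rho>' t \<rho> nr nb]
      flat pos t nr nb by simp
  then have "sin t = 0" using nr_less_nb by simp
  moreover have "-pi < t" "t < pi" using t(1) del by auto
  ultimately have "t = 0" using sin_eq_0_pi by blast
  then show "\<phi> 0 = 0" "\<rho>' 0 = 0" "dc nr Cr \<rho> \<rho>' 0 = dc nb Cb \<rho> \<rho>' 0"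
    using t flat same_ray by auto
qed

lemma \<rho>_at_0:
  "(\<rho> has_real_derivative \<rho>' 0) (at 0 within I)" "(\<rho>' has_real_derivative \<rho>'' 0) (at 0 within I)"
  "0 < \<rho> 0"
  using \<rho> \<rho>' pos zero_in_I by blast+

lemma mc_at_0: "1 < n \<Longrightarrow> mc n \<rho> \<rho>' 0 = (0, 1)"
  using mc_normal_incidence[of \<rho>' 0 \<rho> n] normal_incidence_at_0(2) \<rho>_at_0(3) by (simp add: xv_def)

lemma snell_normals_first_order_at_0:
  "nr / (nr - 1) - \<rho>'' 0 / \<rho> 0 = \<phi>' 0 * (nb / (nb - 1) - \<rho>'' 0 / \<rho> 0)"
proof -
  note \<phi>0 = normal_incidence_at_0(1) and flat = normal_incidence_at_0(2)
    and \<rho>0 = \<rho>_at_0(1,2) and pos0 = \<rho>_at_0(3)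
  have diff: "\<rho> differentiable (at 0 within I)" "\<rho>' differentiable (at 0 within I)"
    using \<rho>0 real_differentiable_def by blast+
  define Ar Ab where "Ar = (nr / (nr - 1) - \<rho>'' 0 / \<rho> 0) / (nr / (nr - 1))"
    and "Ab = (nb / (nb - 1) - \<rho>'' 0 / \<rho> 0) / (nb / (nb - 1))"
  have M1r: "(m1 nr \<rho> \<rho>' has_real_derivative Ar) (at 0 within I)"
    unfolding Ar_def by (rule m1_has_derivative_at_0[OF \<rho>0 flat pos0 nr])
  have M1b: "(m1 nb \<rho> \<rho>' has_real_derivative Ab) (at (\<phi> 0) within I)"
    unfolding Ab_def \<phi>0 by (rule m1_has_derivative_at_0[OF \<rho>0 flat pos0 nb])
  obtain Br Bb where M2r: "(m2 nr \<rho> \<rho>' has_real_derivative Br) (at 0 within I)"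
    and M2b: "(m2 nb \<rho> \<rho>' has_real_derivative Bb) (at (\<phi> 0) within I)"
    using m2_differentiable[OF diff pos0 nr] m2_differentiable[OF diff pos0 nb] \<phi>0
      real_differentiable_def by metis
  have \<phi>_0: "(\<phi> has_real_derivative \<phi>' 0) (at 0 within I)"
    using \<phi> zero_in_I by blast
  have C1: "((\<lambda>t. m1 nb \<rho> \<rho>' (\<phi> t)) has_real_derivative Ab * \<phi>' 0) (at 0 within I)"
    using DERIV_image_chain[OF DERIV_subset[OF M1b \<phi>_maps] \<phi>_0] by (simp add: o_def)
  have C2: "((\<lambda>t. m2 nb \<rho> \<rho>' (\<phi> t)) has_real_derivative Bb * \<phi>' 0) (at 0 within I)"
    using DERIV_image_chain[OF DERIV_subset[OF M2b \<phi>_maps] \<phi>_0] by (simp add: o_def)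
  have "nr * m1 nr \<rho> \<rho>' x * (nb * m2 nb \<rho> \<rho>' (\<phi> x) - 1)
      - (nr * m2 nr \<rho> \<rho>' x - 1) * (nb * m1 nb \<rho> \<rho>' (\<phi> x)) = 0" if "x \<in> I" for x
    using snell_normals_parallel[OF that] by (simp add: cross2_def mc_eq ev_def)
  from has_real_derivative_unique_Icc[OF I_nontrivial zero_in_I this
      DERIV_diff[OF DERIV_mult[OF DERIV_cmult[OF M1r] DERIV_diff[OF DERIV_cmult[OF C2] DERIV_const]]
        DERIV_mult[OF DERIV_diff[OF DERIV_cmult[OF M2r] DERIV_const] DERIV_cmult[OF C1]]]
      DERIV_const]
  have "nr * Ar * (nb - 1) = (nr - 1) * (nb * (Ab * \<phi>' 0))"
    using mc_at_0[OF nr] mc_at_0[OF nb] \<phi>0 by (simp add: mc_eq)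
  moreover have "nr * Ar = (nr - 1) * (nr / (nr - 1) - \<rho>'' 0 / \<rho> 0)"
    "nb * Ab = (nb - 1) * (nb / (nb - 1) - \<rho>'' 0 / \<rho> 0)"
    using nr nb by (simp_all add: Ar_def Ab_def)
  ultimately have "(nr - 1) * (nb - 1) * (nr / (nr - 1) - \<rho>'' 0 / \<rho> 0)
      = (nr - 1) * (nb - 1) * (\<phi>' 0 * (nb / (nb - 1) - \<rho>'' 0 / \<rho> 0))"
    by algebra
  then show ?thesis
    using nr nb by simp
qed

lemma tangents_first_order_at_0:
  "\<rho> 0 + dc nr Cr \<rho> \<rho>' 0 * ((nr / (nr - 1) - \<rho>'' 0 / \<rho> 0) / (nr / (nr - 1)))
    = \<phi>' 0 * (\<rho> 0 + dc nr Cr \<rho> \<rho>' 0 * ((nb / (nb - 1) - \<rho>'' 0 / \<rho> 0) / (nb / (nb - 1))))"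
proof -
  note \<phi>0 = normal_incidence_at_0(1) and flat = normal_incidence_at_0(2)
    and d0 = normal_incidence_at_0(3) and \<rho>0 = \<rho>_at_0(1,2) and pos0 = \<rho>_at_0(3)
  obtain v where v: "(fc nr Cr \<rho> \<rho>' has_vector_derivative v) (at 0 within I)"
    using tangent_r zero_in_I by blast
  obtain w where w: "(fc nb Cb \<rho> \<rho>' has_vector_derivative w) (at 0 within I)"
    using tangent_b zero_in_I by blast
  have "v = \<phi>' 0 *\<^sub>R w"
  proof (rule has_vector_derivative_reparametrization[OF I_nontrivial zero_in_I \<phi>_maps _ _ v])
    show "fc nr Cr \<rho> \<rho>' x = fc nb Cb \<rho> \<rho>' (\<phi> x)" if "x \<in> I" for x
      using reparam that by blast
    show "(\<phi> has_real_derivative \<phi>' 0) (at 0 within I)"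
      using \<phi> zero_in_I by blast
    show "(fc nb Cb \<rho> \<rho>' has_vector_derivative w) (at (\<phi> 0) within I)"
      using w \<phi>0 by simp
  qed
  then show ?thesis
    using fst_fc_tangent_at_0[OF I_nontrivial zero_in_I nr \<rho>0 flat pos0 v]
      fst_fc_tangent_at_0[OF I_nontrivial zero_in_I nb \<rho>0 flat pos0 w] d0
    by simp
qed

end

lemma eliminate_reparametrization_speed:
  fixes \<Delta>r \<Delta>b k p \<rho>0 d0 :: real
  assumes \<Delta>: "0 < \<Delta>b" "\<Delta>b < \<Delta>r" and d0: "0 < d0"
    and normals: "\<Delta>r - k = p * (\<Delta>b - k)"
    and tangents: "\<rho>0 + d0 * ((\<Delta>r - k) / \<Delta>r) = p * (\<rho>0 + d0 * ((\<Delta>b - k) / \<Delta>b))"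
  shows "(\<Delta>r - k) * (\<Delta>b - k) = - (\<rho>0 / d0) * \<Delta>r * \<Delta>b"
proof -
  have "(\<Delta>b - k) * (\<rho>0 + d0 * ((\<Delta>r - k) / \<Delta>r)) = p * (\<Delta>b - k) * (\<rho>0 + d0 * ((\<Delta>b - k) / \<Delta>b))"
    using tangents by simp
  also have "\<dots> = (\<Delta>r - k) * (\<rho>0 + d0 * ((\<Delta>b - k) / \<Delta>b))"
    using normals by simp
  finally have "(\<Delta>r - \<Delta>b) * (d0 * ((\<Delta>r - k) * (\<Delta>b - k)) + \<rho>0 * \<Delta>r * \<Delta>b) = 0"
    using \<Delta> by (simp add: field_simps)
  then have "d0 * ((\<Delta>r - k) * (\<Delta>b - k)) = - (\<rho>0 * \<Delta>r * \<Delta>b)"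
    using \<Delta> by simp
  then show ?thesis
    using d0 by (simp add: field_simps)
qed

lemma quadratic_roots_between:
  fixes \<Delta>r \<Delta>b k \<kappa> :: real
  assumes \<Delta>: "0 < \<Delta>b" "\<Delta>b < \<Delta>r" and \<kappa>: "0 < \<kappa>"
    and quadratic: "(\<Delta>r - k) * (\<Delta>b - k) = - \<kappa> * \<Delta>r * \<Delta>b"
  shows "0 \<le> (\<Delta>r - \<Delta>b)\<^sup>2 - 4 * \<kappa> * \<Delta>r * \<Delta>b"
    and "k = (\<Delta>r + \<Delta>b + sqrt ((\<Delta>r - \<Delta>b)\<^sup>2 - 4 * \<kappa> * \<Delta>r * \<Delta>b)) / 2
       \<or> k = (\<Delta>r + \<Delta>b - sqrt ((\<Delta>r - \<Delta>b)\<^sup>2 - 4 * \<kappa> * \<Delta>r * \<Delta>b)) / 2"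
    and "\<Delta>b < k" "k < \<Delta>r"
proof -
  have disc: "(\<Delta>r - \<Delta>b)\<^sup>2 - 4 * \<kappa> * \<Delta>r * \<Delta>b = (2 * k - \<Delta>r - \<Delta>b)\<^sup>2"
    using quadratic by (simp add: power2_eq_square algebra_simps)
  then show "0 \<le> (\<Delta>r - \<Delta>b)\<^sup>2 - 4 * \<kappa> * \<Delta>r * \<Delta>b" by simp
  show "k = (\<Delta>r + \<Delta>b + sqrt ((\<Delta>r - \<Delta>b)\<^sup>2 - 4 * \<kappa> * \<Delta>r * \<Delta>b)) / 2
       \<or> k = (\<Delta>r + \<Delta>b - sqrt ((\<Delta>r - \<Delta>b)\<^sup>2 - 4 * \<kappa> * \<Delta>r * \<Delta>b)) / 2"
    unfolding disc by (auto simp: abs_if)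
  have "(\<Delta>r - k) * (\<Delta>b - k) < 0"
    using quadratic \<Delta> \<kappa> by simp
  then show "\<Delta>b < k" "k < \<Delta>r"
    using \<Delta> by (auto simp: mult_less_0_iff)
qed

theorem corollary5p9:
  fixes nr nb del Cr Cb :: real and \<rho> \<rho>' \<rho>'' \<phi> :: "real \<Rightarrow> real"
  assumes "1 < nr" and "nr < nb"
    and "local_solution nr nb del \<rho> \<rho>' \<rho>'' Cr Cb \<phi>"
  shows "let \<rho>0 = \<rho> 0; d0 = dc nr Cr \<rho> \<rho>' 0; k0 = \<rho>0 / d0;
             \<Delta>r = nr / (nr - 1); \<Delta>b = nb / (nb - 1);
             disc = (\<Delta>r - \<Delta>b)\<^sup>2 - 4 * k0 * \<Delta>r * \<Delta>b
         in 0 \<le> disc \<and>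
            (\<rho>'' 0 / \<rho>0 = (2 + (\<Delta>r / nr + \<Delta>b / nb) + sqrt disc) / 2 \<or>
             \<rho>'' 0 / \<rho>0 = (2 + (\<Delta>r / nr + \<Delta>b / nb) - sqrt disc) / 2) \<and>
            \<Delta>b < \<rho>'' 0 / \<rho>0 \<and> \<rho>'' 0 / \<rho>0 < \<Delta>r"
proof -
  obtain \<phi>' where "problem_B_solution nr nb del Cr Cb \<rho> \<rho>' \<rho>'' \<phi> \<phi>'"
    using assms by (auto simp: local_solution_def problem_B_solution_def)
  then interpret problem_B_solution nr nb del Cr Cb \<rho> \<rho>' \<rho>'' \<phi> \<phi>' .
  define \<Delta>r \<Delta>b where "\<Delta>r = nr / (nr - 1)" and "\<Delta>b = nb / (nb - 1)"
  have \<Delta>: "0 < \<Delta>b" "\<Delta>b < \<Delta>r"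
    using nr nb nr_less_nb by (simp_all add: \<Delta>r_def \<Delta>b_def field_simps)
  have "0 < \<rho> 0" "0 < dc nr Cr \<rho> \<rho>' 0"
    using pos dc_pos zero_in_I by blast+
  then have "(\<Delta>r - \<rho>'' 0 / \<rho> 0) * (\<Delta>b - \<rho>'' 0 / \<rho> 0) = - (\<rho> 0 / dc nr Cr \<rho> \<rho>' 0) * \<Delta>r * \<Delta>b"
    "0 < \<rho> 0 / dc nr Cr \<rho> \<rho>' 0"
    using eliminate_reparametrization_speed[OF \<Delta> _ snell_normals_first_order_at_0[folded \<Delta>r_def \<Delta>b_def]
        tangents_first_order_at_0[folded \<Delta>r_def \<Delta>b_def]]
    by simp_all
  note roots = quadratic_roots_between[OF \<Delta> this(2,1)]
  have "\<Delta>r / nr = \<Delta>r - 1" "\<Delta>b / nb = \<Delta>b - 1"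
    using nr nb by (simp_all add: \<Delta>r_def \<Delta>b_def field_simps)
  then have "2 + (\<Delta>r / nr + \<Delta>b / nb) = \<Delta>r + \<Delta>b"
    by simp
  with roots show ?thesis
    unfolding Let_def \<Delta>r_def \<Delta>b_def by simp
qed

end
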